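(* Let $e$ be a finite set with $|e|\ge 2$, $\gamma_e:e\to\mathbb{R}_{+}$, $\gamma_e(\mathcal{S})=\sum_{v\in\mathcal{S}}\gamma_e(v)$, and let $g_e:[0,\gamma_e(e)]\to\mathbb{R}_{\ge0}$ be concave with $g_e(0)=g_e(\gamma_e(e))=0$. Let $w_e(\mathcal{S})=g_e(\gamma_e(\mathcal{S}))$ for $\mathcal{S}\subseteq e$. Define $\mathcal{Q}_a=\{\gamma_e(\mathcal{S}):\emptyset\ne\mathcal{S}\subsetneq e\}$ and $\mathcal{Q}_s=\{\gamma_e(\mathcal{S}):\mathcal{S}\subseteq e,\ 0<\gamma_e(\mathcal{S})\le\gamma_e(e)/2\}$. Then: (i) $w_e$ is graph reducible. More precisely, with $r=|\mathcal{Q}_a|$ and $b_1<\dots<b_r$ the elements of $\mathcal{Q}_a$, there exist nonnegative coefficients $a_1,\dots,a_r$ such that for all $\mathcal{S}\subseteq e$, $$w_e(\mathcal{S})=\sum_{i=1}^r a_i\min\{(\gamma_e(e)-b_i)\gamma_e(\mathcal{S}),\ b_i\gamma_e(e\setminus\mathcal{S})\},$$ so that $w_e$ is the gadget splitting function of the graph obtained as the union, over $i=1,\dots,r$, of asymmetric EDVWs-based gadgets with parameters $(a,b)=(a_i(\gamma_e(e)-b_i),\ a_ib_i)$, each with its own auxiliary vertex and all sharing the vertex set $e$ (edges of coefficient zero may be dropped). In particular $w_e$ is the gadget splitting function of a combination of at most $|\mathcal{Q}_a|$ asymmetric EDVWs-based gadgets. (ii) If in addition $g_e$ is symmetric, i.e.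 $g_e(x)=g_e(\gamma_e(e)-x)$ for all $x$, then with $r=|\mathcal{Q}_s|$ and $b_1<\dots<b_r$ the elements of $\mathcal{Q}_s$, there exist nonnegative coefficients $a_1,\dots,a_r$ such that for all $\mathcal{S}\subseteq e$, $$w_e(\mathcal{S})=\sum_{i=1}^r a_i\min\{\gamma_e(\mathcal{S}),\ \gamma_e(e\setminus\mathcal{S}),\ b_i\},$$ so that $w_e$ is the gadget splitting function of the union over $i$ of symmetric EDVWs-based gadgets with parameter $b=b_i$ and all edge weights multiplied by $a_i$, each with its own pair of auxiliary vertices and all sharing the vertex set $e$; i.e. a combination of at most $|\mathcal{Q}_s|$ symmetric EDVWs-based gadgets.
   Context: For a weighted, possibly directed graph $\mathcal{G}$ with vertex set $\mathcal{V}$ and weights $W_{uv}$ (weight of edge from $u$ to $v$), $\mathrm{cut}_{\mathcal{G}}(\mathcal{T})=\sum_{u\in\mathcal{T},v\in\mathcal{V}\setminus\mathcal{T}}W_{uv}$. A gadget for a hyperedge $e$ is a weighted, possibly directed graph $\mathcal{G}_e$ with vertex set $\mathcal{V}'=e\cup\hat{\mathcal{V}}$, $\hat{\mathcal{V}}$ a set of auxiliary vertices disjoint from $e$; its gadget splitting function is $\hat w_e(\mathcal{S})=\min_{\mathcal{T}\subseteq\mathcal{V}',\,\mathcal{T}\cap e=\mathcal{S}}\mathrm{cut}_{\mathcal{G}_e}(\mathcal{T})$. A splitting function is graph reducible if it equals some gadget splitting function. The symmetric EDVWs-based gadget with parameter $b>0$ is the directed graph on $e\cup\{e',e''\}$ with,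 for each $v\in e$, an edge $v\to e'$ of weight $\gamma_e(v)$ and an edge $e''\to v$ of weight $\gamma_e(v)$, plus an edge $e'\to e''$ of weight $b$; its gadget splitting function is $\min\{\gamma_e(\mathcal{S}),\gamma_e(e\setminus\mathcal{S}),b\}$. The asymmetric EDVWs-based gadget with parameters $a,b\ge0$ is the directed graph on $e\cup\{v_e\}$ with, for each $v\in e$, an edge $v\to v_e$ of weight $a\gamma_e(v)$ and an edge $v_e\to v$ of weight $b\gamma_e(v)$; its gadget splitting function is $\min\{a\gamma_e(\mathcal{S}),b\gamma_e(e\setminus\mathcal{S})\}$. *)

theory Defs
  imports "HOL-Analysis.Analysis"
begin

text \<open>Cut of a vertex subset T in a weighted directed graph on vertex set V with
  weights W u v (weight of the edge from u to v; 0 means no edge).\<close>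
definition cut_val :: "'v set \<Rightarrow> ('v \<Rightarrow> 'v \<Rightarrow> real) \<Rightarrow> 'v set \<Rightarrow> real" where
  "cut_val V W T = (\<Sum>u\<in>T. \<Sum>v\<in>V - T. W u v)"

text \<open>Gadget for hyperedge e: vertex set is (Inl ` e) union (Inr ` Aux), auxiliary vertices
  tagged with Inr (hence disjoint from e). Gadget splitting function of a subset S of e.\<close>
definition gadget_split ::
  "'a set \<Rightarrow> 'x set \<Rightarrow> (('a + 'x) \<Rightarrow> ('a + 'x) \<Rightarrow> real) \<Rightarrow> 'a set \<Rightarrow> real" where
  "gadget_split e Aux W S =
     Min {cut_val (Inl ` e \<union> Inr ` Aux) W T | T.
            T \<subseteq> Inl ` e \<union> Inr ` Aux \<and> {v \<in> e. Inl v \<in> T} = S}"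

definition graph_reducible :: "'a set \<Rightarrow> ('a set \<Rightarrow> real) \<Rightarrow> bool" where
  "graph_reducible e w \<longleftrightarrow>
     (\<exists>(Aux :: nat set) W. finite Aux \<and> (\<forall>u v. 0 \<le> W u v) \<and>
        (\<forall>S. S \<subseteq> e \<longrightarrow> w S = gadget_split e Aux W S))"

text \<open>Union over b in an index set of asymmetric EDVWs-based gadgets with parameters
  (alpha b, beta b); the auxiliary vertex of the b-th gadget is Inr b.\<close>
definition asym_union_W ::
  "('a \<Rightarrow> real) \<Rightarrow> (real \<Rightarrow> real) \<Rightarrow> (real \<Rightarrow> real) \<Rightarrow> ('a + real) \<Rightarrow> ('a + real) \<Rightarrow> real" where
  "asym_union_W \<gamma> \<alpha> \<beta> x y =
     (case (x, y) of (Inl v, Inr b) \<Rightarrow> \<alpha> b * \<gamma> v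
                   | (Inr b, Inl v) \<Rightarrow> \<beta> b * \<gamma> v
                   | _ \<Rightarrow> 0)"

text \<open>Union over b in an index set of symmetric EDVWs-based gadgets with parameter b, all
  edge weights multiplied by c b; auxiliary vertices e'_b = Inr (b, False), e''_b = Inr (b, True).\<close>
definition sym_union_W ::
  "('a \<Rightarrow> real) \<Rightarrow> (real \<Rightarrow> real) \<Rightarrow> ('a + real \<times> bool) \<Rightarrow> ('a + real \<times> bool) \<Rightarrow> real" where
  "sym_union_W \<gamma> c x y =
     (case (x, y) of (Inl v, Inr (b, False)) \<Rightarrow> c b * \<gamma> v
                   | (Inr (b, True), Inl v) \<Rightarrow> c b * \<gamma> v
                   | (Inr (b, False), Inr (b', True)) \<Rightarrow> (if b = b' then c b * b else 0)
                   | _ \<Rightarrow> 0)"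

definition Q_a :: "'a set \<Rightarrow> ('a \<Rightarrow> real) \<Rightarrow> real set" where
  "Q_a e \<gamma> = {sum \<gamma> S | S. S \<noteq> {} \<and> S \<subset> e}"

definition Q_s :: "'a set \<Rightarrow> ('a \<Rightarrow> real) \<Rightarrow> real set" where
  "Q_s e \<gamma> = {sum \<gamma> S | S. S \<subseteq> e \<and> 0 < sum \<gamma> S \<and> sum \<gamma> S \<le> sum \<gamma> e / 2}"

end

theory Submission
  imports Defs
begin

text \<open>On the finitely many values \<open>\<gamma>(S)\<close>, the concave function \<open>g\<close> agrees with its piecewise linear
  interpolant, which is a combination of hinges \<open>x \<mapsto> min x b\<close> at the breakpoints \<open>b\<close>, the weight
  of a hinge being the drop of slope at \<open>b\<close>; concavity makes these weights nonnegative. Since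
  \<open>g(0) = g(\<gamma>(e)) = 0\<close>, the hinge at \<open>\<gamma>(e)\<close> can be traded for the linear parts of the others,
  which turns them into tents \<open>min ((\<gamma>(e) - b) x) (b (\<gamma>(e) - x))\<close>. A symmetric \<open>g\<close> is determined
  by its values on \<open>[0, \<gamma>(e)/2]\<close>, where it is nondecreasing, so that hinges at breakpoints up to
  \<open>\<gamma>(e)/2\<close> suffice and all weights are nonnegative. Finally, a tent is the splitting function of
  an asymmetric EDVWs-based gadget and a hinge in \<open>min (\<gamma>(S)) (\<gamma>(e - S))\<close> that of a symmetric one:
  a minimum cut places each auxiliary vertex on its cheaper side.\<close>

text \<open>The weights of \<open>asym_union_W\<close> with auxiliary vertices of an arbitrary type:
  \<open>graph_reducible\<close> requires them to be natural numbers.\<close>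
definition asym_gadgets_W ::
  "('a \<Rightarrow> real) \<Rightarrow> ('x \<Rightarrow> real) \<Rightarrow> ('x \<Rightarrow> real) \<Rightarrow> ('a + 'x) \<Rightarrow> ('a + 'x) \<Rightarrow> real" where
  "asym_gadgets_W \<gamma> \<alpha> \<beta> u v =
     (case (u, v) of (Inl a, Inr x) \<Rightarrow> \<alpha> x * \<gamma> a
                   | (Inr x, Inl a) \<Rightarrow> \<beta> x * \<gamma> a
                   | _ \<Rightarrow> 0)"

lemma asym_gadgets_W_simps [simp]:
  "asym_gadgets_W \<gamma> \<alpha> \<beta> (Inl a) (Inl a') = 0"
  "asym_gadgets_W \<gamma> \<alpha> \<beta> (Inl a) (Inr x) = \<alpha> x * \<gamma> a"
  "asym_gadgets_W \<gamma> \<alpha> \<beta> (Inr x) (Inl a) = \<beta> x * \<gamma> a"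
  "asym_gadgets_W \<gamma> \<alpha> \<beta> (Inr x) (Inr x') = 0"
  by (simp_all add: asym_gadgets_W_def)

lemma asym_union_W_eq_asym_gadgets_W: "asym_union_W = asym_gadgets_W"
  by (intro ext) (simp add: asym_union_W_def asym_gadgets_W_def)

lemma sym_union_W_simps [simp]:
  "sym_union_W \<gamma> c (Inl a) (Inl a') = 0"
  "sym_union_W \<gamma> c (Inl a) (Inr (b, t)) = (if t then 0 else c b * \<gamma> a)"
  "sym_union_W \<gamma> c (Inr (b, t)) (Inl a) = (if t then c b * \<gamma> a else 0)"
  "sym_union_W \<gamma> c (Inr (b, t)) (Inr (b', t')) = (if \<not> t \<and> t' \<and> b = b' then c b * b else 0)"
  by (auto simp: sym_union_W_def split: bool.splits)

lemma sum_Inl_Inr_image: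
  assumes "finite A" "finite B"
  shows "(\<Sum>u\<in>Inl ` A \<union> Inr ` B. F u) = (\<Sum>a\<in>A. F (Inl a)) + (\<Sum>b\<in>B. F (Inr b))"
  using assms by (subst sum.union_disjoint) (auto simp: sum.reindex)

lemma cut_val_conv_sum:
  assumes "finite V" "T \<subseteq> V"
  shows "cut_val V W T = (\<Sum>u\<in>V. \<Sum>v\<in>V. if u \<in> T \<and> v \<notin> T then W u v else 0)"
proof -
  have "cut_val V W T = (\<Sum>u\<in>T. \<Sum>v\<in>V. if u \<in> T \<and> v \<notin> T then W u v else 0)"
    unfolding cut_val_def
  proof (rule sum.cong[OF refl])
    fix u assume "u \<in> T"
    show "sum (W u) (V - T) = (\<Sum>v\<in>V. if u \<in> T \<and> v \<notin> T then W u v else 0)"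
      by (rule sum.mono_neutral_cong_left) (use assms \<open>u \<in> T\<close> in auto)
  qed
  also have "\<dots> = (\<Sum>u\<in>V. \<Sum>v\<in>V. if u \<in> T \<and> v \<notin> T then W u v else 0)"
    by (rule sum.mono_neutral_cong_left) (use assms in auto)
  finally show ?thesis .
qed

lemma sum_restrict_mult:
  fixes \<gamma> :: "'a \<Rightarrow> real"
  assumes "finite e"
  shows "(\<Sum>a\<in>e. if a \<in> S then c * \<gamma> a else 0) = c * sum \<gamma> (e \<inter> S)"
proof -
  have "(\<Sum>a\<in>e. if a \<in> S then c * \<gamma> a else 0) = (\<Sum>a\<in>e \<inter> S. c * \<gamma> a)"
    by (simp add: sum.inter_restrict[OF assms])
  also have "\<dots> = c * sum \<gamma> (e \<inter> S)"
    by (simp add: sum_distrib_left)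
  finally show ?thesis .
qed

lemma cut_val_Inl_Inr:
  assumes "finite e" "finite X" "T \<subseteq> Inl ` e \<union> Inr ` X"
  shows "cut_val (Inl ` e \<union> Inr ` X) W T =
      (\<Sum>a\<in>e. \<Sum>a'\<in>e. if Inl a \<in> T \<and> Inl a' \<notin> T then W (Inl a) (Inl a') else 0)
    + (\<Sum>a\<in>e. \<Sum>x\<in>X. if Inl a \<in> T \<and> Inr x \<notin> T then W (Inl a) (Inr x) else 0)
    + (\<Sum>x\<in>X. \<Sum>a\<in>e. if Inr x \<in> T \<and> Inl a \<notin> T then W (Inr x) (Inl a) else 0)
    + (\<Sum>x\<in>X. \<Sum>x'\<in>X. if Inr x \<in> T \<and> Inr x' \<notin> T then W (Inr x) (Inr x') else 0)"
  using assms by (simp add: cut_val_conv_sum sum_Inl_Inr_image sum.distrib)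

lemma gadget_split_eqI:
  assumes fin: "finite e" "finite X"
    and lower: "\<And>T. T \<subseteq> Inl ` e \<union> Inr ` X \<Longrightarrow> {v \<in> e. Inl v \<in> T} = S \<Longrightarrow>
      m \<le> cut_val (Inl ` e \<union> Inr ` X) W T"
    and attained: "T \<subseteq> Inl ` e \<union> Inr ` X" "{v \<in> e. Inl v \<in> T} = S"
      "cut_val (Inl ` e \<union> Inr ` X) W T = m"
  shows "gadget_split e X W S = m"
  unfolding gadget_split_def
proof (rule Min_eqI)
  have "{cut_val (Inl ` e \<union> Inr ` X) W T |T. T \<subseteq> Inl ` e \<union> Inr ` X \<and> {v \<in> e. Inl v \<in> T} = S}
     \<subseteq> cut_val (Inl ` e \<union> Inr ` X) W ` Pow (Inl ` e \<union> Inr ` X)"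
    by auto
  then show "finite {cut_val (Inl ` e \<union> Inr ` X) W T |T. T \<subseteq> Inl ` e \<union> Inr ` X \<and> {v \<in> e. Inl v \<in> T} = S}"
    by (rule finite_subset) (use fin in auto)
qed (use lower attained in auto)

lemma cut_val_asym_gadgets:
  fixes \<gamma> :: "'a \<Rightarrow> real"
  assumes fin: "finite e" "finite X"
    and T: "T \<subseteq> Inl ` e \<union> Inr ` X" "{v \<in> e. Inl v \<in> T} = S"
  shows "cut_val (Inl ` e \<union> Inr ` X) (asym_gadgets_W \<gamma> \<alpha> \<beta>) T =
      (\<Sum>x\<in>X. if Inr x \<in> T then \<beta> x * sum \<gamma> (e - S) else \<alpha> x * sum \<gamma> S)"
proof -
  have Inl_T: "Inl a \<in> T \<longleftrightarrow> a \<in> S" if "a \<in> e" for a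
    using T that by auto
  have "S \<subseteq> e"
    using T by auto
  have Inl_Inr: "(\<Sum>a\<in>e. \<Sum>x\<in>X. if Inl a \<in> T \<and> Inr x \<notin> T then asym_gadgets_W \<gamma> \<alpha> \<beta> (Inl a) (Inr x) else 0)
      = (\<Sum>x\<in>X. if Inr x \<in> T then 0 else \<alpha> x * sum \<gamma> S)"
    using fin Inl_T sum_restrict_mult[of e S] Int_absorb1[OF \<open>S \<subseteq> e\<close>]
    by (subst sum.swap) (auto intro!: sum.cong cong: if_cong)
  have Inr_Inl: "(\<Sum>x\<in>X. \<Sum>a\<in>e. if Inr x \<in> T \<and> Inl a \<notin> T then asym_gadgets_W \<gamma> \<alpha> \<beta> (Inr x) (Inl a) else 0)
      = (\<Sum>x\<in>X. if Inr x \<in> T then \<beta> x * sum \<gamma> (e - S) else 0)"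
    using fin Inl_T sum_restrict_mult[of e "- S"]
    by (auto simp: Diff_eq intro!: sum.cong cong: if_cong)
  show ?thesis
    unfolding cut_val_Inl_Inr[OF fin T(1)] Inl_Inr Inr_Inl
    by (simp add: sum.distrib[symmetric] cong: if_cong) (intro sum.cong; simp)
qed

lemma gadget_split_asym_gadgets:
  assumes fin: "finite e" "finite X" and "S \<subseteq> e"
  shows "gadget_split e X (asym_gadgets_W \<gamma> \<alpha> \<beta>) S =
    (\<Sum>x\<in>X. min (\<alpha> x * sum \<gamma> S) (\<beta> x * sum \<gamma> (e - S)))"
proof (rule gadget_split_eqI[OF fin])
  fix T assume T: "T \<subseteq> Inl ` e \<union> Inr ` X" "{v \<in> e. Inl v \<in> T} = S"
  show "(\<Sum>x\<in>X. min (\<alpha> x * sum \<gamma> S) (\<beta> x * sum \<gamma> (e - S)))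
      \<le> cut_val (Inl ` e \<union> Inr ` X) (asym_gadgets_W \<gamma> \<alpha> \<beta>) T"
    unfolding cut_val_asym_gadgets[OF fin T] by (intro sum_mono) auto
next
  \<comment> \<open>put the auxiliary vertex of a gadget on the side where cutting its edges is cheaper\<close>
  define T where "T = Inl ` S \<union> Inr ` {x\<in>X. \<beta> x * sum \<gamma> (e - S) \<le> \<alpha> x * sum \<gamma> S}"
  show T: "T \<subseteq> Inl ` e \<union> Inr ` X" "{v \<in> e. Inl v \<in> T} = S"
    using \<open>S \<subseteq> e\<close> by (auto simp: T_def)
  show "cut_val (Inl ` e \<union> Inr ` X) (asym_gadgets_W \<gamma> \<alpha> \<beta>) T =
      (\<Sum>x\<in>X. min (\<alpha> x * sum \<gamma> S) (\<beta> x * sum \<gamma> (e - S)))"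
    unfolding cut_val_asym_gadgets[OF fin T] by (intro sum.cong refl) (auto simp: T_def min_def)
qed

lemma sum_times_UNIV_bool:
  assumes "finite I"
  shows "(\<Sum>y\<in>I \<times> UNIV. F y) = (\<Sum>b\<in>I. F (b, False) + F (b, True))"
proof -
  have "(\<Sum>y\<in>I \<times> UNIV. F y) = (\<Sum>b\<in>I. \<Sum>t\<in>UNIV. F (b, t))"
    by (simp add: sum.cartesian_product)
  then show ?thesis
    by (simp add: UNIV_bool)
qed

lemma cut_val_sym_union:
  fixes \<gamma> :: "'a \<Rightarrow> real" and c :: "real \<Rightarrow> real"
  assumes fin: "finite e" "finite I"
    and T: "T \<subseteq> Inl ` e \<union> Inr ` (I \<times> UNIV)" "{v \<in> e. Inl v \<in> T} = S"
  shows "cut_val (Inl ` e \<union> Inr ` (I \<times> UNIV)) (sym_union_W \<gamma> c) T =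
      (\<Sum>b\<in>I. (if Inr (b, False) \<in> T then 0 else c b * sum \<gamma> S)
             + (if Inr (b, True) \<in> T then c b * sum \<gamma> (e - S) else 0)
             + (if Inr (b, False) \<in> T \<and> Inr (b, True) \<notin> T then c b * b else 0))"
proof -
  have Inl_T: "Inl a \<in> T \<longleftrightarrow> a \<in> S" if "a \<in> e" for a
    using T that by auto
  have "S \<subseteq> e"
    using T by auto
  have finX: "finite (I \<times> (UNIV :: bool set))"
    using fin by simp
  have Inl_Inl: "(\<Sum>a\<in>e. \<Sum>a'\<in>e. if Inl a \<in> T \<and> Inl a' \<notin> T then sym_union_W \<gamma> c (Inl a) (Inl a') else 0) = 0"
    by (simp cong: if_cong)
  have Inl_Inr: "(\<Sum>a\<in>e. \<Sum>y\<in>I \<times> UNIV. if Inl a \<in> T \<and> Inr y \<notin> T then sym_union_W \<gamma> c (Inl a) (Inr y) else 0)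
      = (\<Sum>b\<in>I. if Inr (b, False) \<in> T then 0 else c b * sum \<gamma> S)"
    using fin Inl_T sum_restrict_mult[of e S] Int_absorb1[OF \<open>S \<subseteq> e\<close>]
    by (subst sum.swap) (auto simp: sum_times_UNIV_bool intro!: sum.cong cong: if_cong)
  have Inr_Inl: "(\<Sum>y\<in>I \<times> UNIV. \<Sum>a\<in>e. if Inr y \<in> T \<and> Inl a \<notin> T then sym_union_W \<gamma> c (Inr y) (Inl a) else 0)
      = (\<Sum>b\<in>I. if Inr (b, True) \<in> T then c b * sum \<gamma> (e - S) else 0)"
    using fin Inl_T sum_restrict_mult[of e "- S"]
    by (auto simp: sum_times_UNIV_bool Diff_eq intro!: sum.cong cong: if_cong)
  have Inr_Inr: "(\<Sum>y\<in>I \<times> UNIV. \<Sum>z\<in>I \<times> UNIV. if Inr y \<in> T \<and> Inr z \<notin> T then sym_union_W \<gamma> c (Inr y) (Inr z) else 0)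
      = (\<Sum>b\<in>I. if Inr (b, False) \<in> T \<and> Inr (b, True) \<notin> T then c b * b else 0)"
  proof -
    have delta: "(\<Sum>b'\<in>I. if P b' then if b = b' then h b' else 0 else 0) = (if P b then h b else 0)"
      if "b \<in> I" for P and h :: "real \<Rightarrow> real" and b
      using fin(2) that
      by (subst sum.cong[OF refl, of _ _ "\<lambda>b'. if b = b' then if P b' then h b' else 0 else 0"]) auto
    show ?thesis
      using fin by (auto simp: sum_times_UNIV_bool delta intro!: sum.cong cong: if_cong)
  qed
  show ?thesis
    unfolding cut_val_Inl_Inr[OF fin(1) finX T(1)] Inl_Inl Inl_Inr Inr_Inl Inr_Inr
    by (simp add: sum.distrib)
qed

lemma min3_le_sym_gadget_cut:
  fixes c x y b :: real
  assumes "0 \<le> c" "0 \<le> y"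
  shows "c * min (min x y) b
    \<le> (if P then 0 else c * x) + (if Q then c * y else 0) + (if P \<and> \<not> Q then c * b else 0)"
proof -
  have "c * min (min x y) b \<le> c * x" "c * min (min x y) b \<le> c * y" "c * min (min x y) b \<le> c * b"
    using assms by (auto intro!: mult_left_mono)
  moreover have "0 \<le> c * y"
    using assms by simp
  ultimately show ?thesis
    by auto
qed

lemma gadget_split_sym_union:
  fixes \<gamma> :: "'a \<Rightarrow> real" and c :: "real \<Rightarrow> real"
  assumes fin: "finite e" "finite I" and "S \<subseteq> e"
    and c_nonneg: "\<forall>b\<in>I. 0 \<le> c b" and \<gamma>_nonneg: "\<forall>v\<in>e. 0 \<le> \<gamma> v"
  shows "gadget_split e (I \<times> UNIV) (sym_union_W \<gamma> c) S
     = (\<Sum>b\<in>I. c b * min (min (sum \<gamma> S) (sum \<gamma> (e - S))) b)"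
proof (rule gadget_split_eqI)
  show "finite e" "finite (I \<times> (UNIV :: bool set))"
    using fin by auto
next
  fix T :: "('a + real \<times> bool) set"
  assume T: "T \<subseteq> Inl ` e \<union> Inr ` (I \<times> UNIV)" "{v \<in> e. Inl v \<in> T} = S"
  have "0 \<le> sum \<gamma> (e - S)"
    using \<gamma>_nonneg by (intro sum_nonneg) auto
  show "(\<Sum>b\<in>I. c b * min (min (sum \<gamma> S) (sum \<gamma> (e - S))) b)
      \<le> cut_val (Inl ` e \<union> Inr ` (I \<times> UNIV)) (sym_union_W \<gamma> c) T"
    unfolding cut_val_sym_union[OF fin T] using c_nonneg \<open>0 \<le> sum \<gamma> (e - S)\<close>
    by (intro sum_mono min3_le_sym_gadget_cut) auto
next
  \<comment> \<open>in the \<open>b\<close>-th gadget, \<open>Inr (b, False)\<close> joins \<open>S\<close> unless cutting off \<open>S\<close> is cheapest,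
    and \<open>Inr (b, True)\<close> joins \<open>S\<close> only if cutting off \<open>e - S\<close> is cheapest\<close>
  define C where "C = {b \<in> I. sum \<gamma> (e - S) \<le> sum \<gamma> S \<or> b \<le> sum \<gamma> S}"
  define D where "D = {b \<in> I. sum \<gamma> (e - S) \<le> sum \<gamma> S \<and> sum \<gamma> (e - S) \<le> b}"
  define T where "T = Inl ` S \<union> Inr ` (C \<times> {False} \<union> D \<times> {True})"
  show T: "T \<subseteq> Inl ` e \<union> Inr ` (I \<times> UNIV)" "{v \<in> e. Inl v \<in> T} = S"
    using \<open>S \<subseteq> e\<close> by (auto simp: T_def C_def D_def)
  show "cut_val (Inl ` e \<union> Inr ` (I \<times> UNIV)) (sym_union_W \<gamma> c) T
      = (\<Sum>b\<in>I. c b * min (min (sum \<gamma> S) (sum \<gamma> (e - S))) b)"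
    unfolding cut_val_sym_union[OF fin T]
  proof (rule sum.cong[OF refl])
    fix b assume "b \<in> I"
    then show "(if Inr (b, False) \<in> T then 0 else c b * sum \<gamma> S)
        + (if Inr (b, True) \<in> T then c b * sum \<gamma> (e - S) else 0)
        + (if Inr (b, False) \<in> T \<and> Inr (b, True) \<notin> T then c b * b else 0)
      = c b * min (min (sum \<gamma> S) (sum \<gamma> (e - S))) b"
      by (auto simp: T_def C_def D_def min_def)
  qed
qed

lemma graph_reducible_sum_asym_gadgets:
  fixes \<gamma> :: "'a \<Rightarrow> real" and \<alpha> \<beta> :: "'x \<Rightarrow> real"
  assumes "finite e" "finite X" and \<gamma>_nonneg: "\<forall>v\<in>e. 0 \<le> \<gamma> v"
    and \<alpha>_nonneg: "\<forall>x\<in>X. 0 \<le> \<alpha> x" and \<beta>_nonneg: "\<forall>x\<in>X. 0 \<le> \<beta> x"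
    and w: "\<And>S. S \<subseteq> e \<Longrightarrow> w S = (\<Sum>x\<in>X. min (\<alpha> x * sum \<gamma> S) (\<beta> x * sum \<gamma> (e - S)))"
  shows "graph_reducible e w"
proof -
  obtain \<phi> where \<phi>: "bij_betw \<phi> {0..<card X} X"
    using ex_bij_betw_nat_finite[OF \<open>finite X\<close>] by blast
  \<comment> \<open>the weights must be nonnegative everywhere, not only on e and X\<close>
  define \<gamma>' where "\<gamma>' v = (if v \<in> e then \<gamma> v else 0)" for v
  define \<alpha>' where "\<alpha>' i = (if i < card X then \<alpha> (\<phi> i) else 0)" for i
  define \<beta>' where "\<beta>' i = (if i < card X then \<beta> (\<phi> i) else 0)" for i
  have \<phi>_in: "\<phi> i \<in> X" if "i < card X" for i
    using \<phi> that by (auto simp: bij_betw_def)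
  have "0 \<le> \<gamma>' v" "0 \<le> \<alpha>' i" "0 \<le> \<beta>' i" for v i
    using \<gamma>_nonneg \<alpha>_nonneg \<beta>_nonneg \<phi>_in by (simp_all add: \<gamma>'_def \<alpha>'_def \<beta>'_def)
  then have W_nonneg: "0 \<le> asym_gadgets_W \<gamma>' \<alpha>' \<beta>' u v" for u v
    by (cases u; cases v) simp_all
  have split_eq: "w S = gadget_split e {0..<card X} (asym_gadgets_W \<gamma>' \<alpha>' \<beta>') S" if "S \<subseteq> e" for S
  proof -
    have "sum \<gamma>' S = sum \<gamma> S"
      using that by (intro sum.cong) (auto simp: \<gamma>'_def)
    moreover have "sum \<gamma>' (e - S) = sum \<gamma> (e - S)"
      by (intro sum.cong) (auto simp: \<gamma>'_def)
    ultimately show ?thesis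
      using that \<open>finite e\<close>
      by (simp add: w gadget_split_asym_gadgets \<alpha>'_def \<beta>'_def sum.reindex_bij_betw[OF \<phi>, symmetric])
  qed
  show ?thesis
    unfolding graph_reducible_def
    by (intro exI[of _ "{0..<card X}"] exI[of _ "asym_gadgets_W \<gamma>' \<alpha>' \<beta>'"] conjI allI impI
        finite_atLeastLessThan W_nonneg split_eq)
qed

lemma obtain_strict_mono_enumeration:
  fixes N :: "'a::linorder set"
  assumes "finite N" "N \<noteq> {}"
  obtains t :: "nat \<Rightarrow> 'a" and n where "strict_mono_on {..n} t" "t ` {..n} = N"
    "t 0 = Min N" "t n = Max N"
proof -
  define xs where "xs = sorted_list_of_set N"
  define n where "n = length xs - 1"
  have sorted: "sorted_wrt (<) xs" and set_xs: "set xs = N"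
    using assms(1) by (simp_all add: xs_def)
  then have len: "length xs = Suc n"
    using assms(2) by (cases xs) (auto simp: n_def)
  have mono: "strict_mono_on {..n} ((!) xs)"
    using sorted len by (intro strict_mono_onI) (auto simp: sorted_wrt_iff_nth_less)
  have img: "(!) xs ` {..n} = N"
    using len set_xs by (metis atMost_upto set_map map_nth set_upt)
  have "xs ! 0 \<le> xs ! i" "xs ! i \<le> xs ! n" if "i \<le> n" for i
    using that by (simp_all add: strict_mono_on_less_eq[OF mono])
  then have "xs ! 0 = Min N" "xs ! n = Max N"
    using img assms by (auto intro!: Min_eqI[symmetric] Max_eqI[symmetric])
  with mono img show thesis by (rule that)
qed

lemma sum_slope_differences_min_eq:
  fixes t f s :: "nat \<Rightarrow> real"
  assumes mono: "strict_mono_on {..n} t" and t0: "t 0 = 0" and f0: "f 0 = 0"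
    and slope: "\<And>j. j \<in> {1..n} \<Longrightarrow> f j - f (j - 1) = s j * (t j - t (j - 1))"
    and "k \<le> n"
  shows "(\<Sum>j=1..n. (s j - s (Suc j)) * min (t k) (t j)) = f k - s (Suc n) * t k"
  using \<open>k \<le> n\<close>
proof (induction k)
  case 0
  have "0 \<le> t j" if "j \<le> n" for j
    using that t0 strict_mono_on_less_eq[OF mono, of 0 j] by simp
  then show ?case using t0 f0 by (simp add: min_def)
next
  case (Suc k)
  have step: "min (t (Suc k)) (t j) - min (t k) (t j) = (if Suc k \<le> j then t (Suc k) - t k else 0)"
    if "j \<le> n" for j
    using that Suc.prems strict_mono_on_less_eq[OF mono, of _ j] strict_mono_on_less[OF mono, of k]
    by (cases "j = k") (auto simp: min_def not_le)
  have "(\<Sum>j=1..n. (s j - s (Suc j)) * min (t (Suc k)) (t j))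
      - (\<Sum>j=1..n. (s j - s (Suc j)) * min (t k) (t j))
      = (\<Sum>j=1..n. if Suc k \<le> j then (s j - s (Suc j)) * (t (Suc k) - t k) else 0)"
    by (simp add: sum_subtractf[symmetric] right_diff_distrib[symmetric]) (intro sum.cong; simp add: step)
  also have "\<dots> = (\<Sum>j=Suc k..n. s j - s (Suc j)) * (t (Suc k) - t k)"
    using Suc.prems by (simp add: sum.If_cases sum_distrib_right Int_def atLeastAtMost_def)
      (intro sum.cong; auto)
  also have "(\<Sum>j=Suc k..n. s j - s (Suc j)) = s (Suc k) - s (Suc n)"
    using Suc.prems sum_Suc_diff[of "Suc k" n s] by (simp add: sum_subtractf)
  finally show ?case
    using Suc slope[of "Suc k"] by (simp add: algebra_simps)
qed

lemma concave_on_subset: "concave_on T f \<Longrightarrow> S \<subseteq> T \<Longrightarrow> convex S \<Longrightarrow> concave_on S f"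
  unfolding concave_on_def by (rule convex_on_subset)

lemma concave_on_slope_le:
  fixes g :: "real \<Rightarrow> real"
  assumes "concave_on I g" "x \<in> I" "z \<in> I" "x < y" "y < z"
  shows "(g z - g y) / (z - y) \<le> (g y - g x) / (y - x)"
proof -
  have "convex_on I (\<lambda>x. - g x)"
    using assms(1) by (simp add: concave_on_def)
  from convex_on_slope_le[OF this assms(2,3)] assms(4,5)
  have "(g y - g x) / (x - y) \<le> (g z - g y) / (y - z)"
    by (smt (verit, best) minus_divide_left)
  then show ?thesis
    by (smt (verit, best) minus_divide_right minus_diff_eq)
qed

lemma concave_nodes_eq_sum_hinges:
  fixes t :: "nat \<Rightarrow> real" and g :: "real \<Rightarrow> real"
  assumes mono: "strict_mono_on {..n} t" and t0: "t 0 = 0"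
    and conc: "concave_on {0..t n} g" and g0: "g 0 = 0"
    and s_def: "\<And>j. s j = (if j \<in> {1..n} then (g (t j) - g (t (j - 1))) / (t j - t (j - 1)) else 0)"
  shows "k \<le> n \<Longrightarrow> g (t k) = (\<Sum>j=1..n. (s j - s (Suc j)) * min (t k) (t j))"
    and "j \<in> {1..<n} \<Longrightarrow> s (Suc j) \<le> s j"
    and "g (t (n - 1)) \<le> g (t n) \<Longrightarrow> 0 \<le> s n"
proof -
  have t_less: "t i < t j \<longleftrightarrow> i < j" if "i \<le> n" "j \<le> n" for i j
    using strict_mono_on_less[OF mono] that by simp
  have t_range: "t j \<in> {0..t n}" if "j \<le> n" for j
    using that strict_mono_on_less_eq[OF mono, of 0 j] strict_mono_on_less_eq[OF mono, of j n]
    by (simp add: t0)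
  have "g (t j) - g (t (j - 1)) = s j * (t j - t (j - 1))" if "j \<in> {1..n}" for j
    using that t_less[of "j - 1" j] by (simp add: s_def)
  then show "k \<le> n \<Longrightarrow> g (t k) = (\<Sum>j=1..n. (s j - s (Suc j)) * min (t k) (t j))"
    using sum_slope_differences_min_eq[OF mono t0, of "g \<circ> t" s k] t0 g0 by (simp add: s_def)
  show "s (Suc j) \<le> s j" if "j \<in> {1..<n}"
  proof -
    have "(g (t (Suc j)) - g (t j)) / (t (Suc j) - t j) \<le> (g (t j) - g (t (j - 1))) / (t j - t (j - 1))"
      using that t_range t_less by (intro concave_on_slope_le[OF conc]) auto
    then show ?thesis
      using that by (simp add: s_def)
  qed
  show "0 \<le> s n" if "g (t (n - 1)) \<le> g (t n)"
    using that t_less[of "n - 1" n] by (cases "n = 0") (simp_all add: s_def)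
qed

lemma concave_eq_sum_hinges:
  fixes g :: "real \<Rightarrow> real" and N :: "real set"
  assumes N: "finite N" "0 \<in> N" "N \<subseteq> {0..}"
    and conc: "concave_on {0..Max N} g" and g0: "g 0 = 0"
  obtains d where "\<forall>b\<in>N - {0}. b < Max N \<longrightarrow> 0 \<le> d b"
    and "(\<forall>x\<in>N. g x \<le> g (Max N)) \<Longrightarrow> 0 \<le> d (Max N)"
    and "\<forall>x\<in>N. g x = (\<Sum>b\<in>N - {0}. d b * min x b)"
proof -
  have "N \<noteq> {}"
    using N by auto
  then obtain t :: "nat \<Rightarrow> real" and n where mono: "strict_mono_on {..n} t" and img: "t ` {..n} = N"
    and t_Min: "t 0 = Min N" and tn: "t n = Max N"
    by (rule obtain_strict_mono_enumeration[OF N(1)])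
  have t0: "t 0 = 0"
    unfolding t_Min using N by (intro Min_eqI) auto
  define s where "s j = (if j \<in> {1..n} then (g (t j) - g (t (j - 1))) / (t j - t (j - 1)) else 0)"
    for j
  note hinges = concave_nodes_eq_sum_hinges[OF mono t0 conc[folded tn] g0 s_def]
  have inj: "inj_on t {..n}"
    using mono by (rule strict_mono_on_imp_inj_on)
  define d where "d b = s (the_inv_into {..n} t b) - s (Suc (the_inv_into {..n} t b))" for b
  have d_t: "d (t j) = s j - s (Suc j)" if "j \<le> n" for j
    using that inj by (simp add: d_def the_inv_into_f_f)
  have "{..n} - {0} = {1..n}"
    by auto
  then have nodes: "N - {0} = t ` {1..n}"
    using inj_on_image_set_diff[OF inj, of "{..n}" "{0}"] img t0 by simp
  show thesis
  proof (rule that)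
    show "\<forall>b\<in>N - {0}. b < Max N \<longrightarrow> 0 \<le> d b"
      using nodes hinges(2) by (auto simp: d_t tn[symmetric] strict_mono_on_less[OF mono])
    show "0 \<le> d (Max N)" if "\<forall>x\<in>N. g x \<le> g (Max N)"
      using that img hinges(3) by (auto simp: tn[symmetric] d_t s_def)
    show "\<forall>x\<in>N. g x = (\<Sum>b\<in>N - {0}. d b * min x b)"
      using img inj_on_subset[OF inj, of "{1..n}"]
      by (auto simp: nodes sum.reindex hinges(1) d_t)
  qed
qed

lemma min_tent_eq:
  fixes G b x :: real
  assumes "0 < G"
  shows "min ((G - b) * x) (b * (G - x)) = G * min x b - b * x"
proof (cases "x \<le> b")
  case True
  then have "(G - b) * x \<le> b * (G - x)"
    using mult_left_mono[OF True, of G] assms by (simp add: algebra_simps)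
  then show ?thesis
    using True by (simp add: algebra_simps)
next
  case False
  then have "b * (G - x) \<le> (G - b) * x"
    using mult_left_mono[of b x G] assms by (simp add: algebra_simps)
  then show ?thesis
    using False by (simp add: algebra_simps)
qed

lemma sum_hinges_eq_sum_tents:
  fixes G c x :: real
  assumes "0 < G" and "(\<Sum>b\<in>Q. d b * b) = - (c * G)"
  shows "c * x + (\<Sum>b\<in>Q. d b * min x b) = (\<Sum>b\<in>Q. d b / G * min ((G - b) * x) (b * (G - x)))"
proof -
  have "(\<Sum>b\<in>Q. d b / G * min ((G - b) * x) (b * (G - x)))
      = (\<Sum>b\<in>Q. d b * min x b - x / G * (d b * b))"
    unfolding min_tent_eq[OF \<open>0 < G\<close>] using \<open>0 < G\<close> by (intro sum.cong) (simp_all add: field_simps)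
  also have "\<dots> = (\<Sum>b\<in>Q. d b * min x b) - x / G * (\<Sum>b\<in>Q. d b * b)"
    by (simp add: sum_subtractf sum_distrib_left)
  also have "\<dots> = c * x + (\<Sum>b\<in>Q. d b * min x b)"
    using assms by simp
  finally show ?thesis ..
qed

lemma concave_eq_sum_tents:
  fixes g :: "real \<Rightarrow> real" and Q :: "real set"
  assumes Q: "finite Q" "Q \<subseteq> {0<..<G}"
    and conc: "concave_on {0..G} g" and g0: "g 0 = 0" and gG: "g G = 0"
  obtains a where "\<forall>b\<in>Q. 0 \<le> a b"
    and "\<forall>x\<in>insert 0 (insert G Q). g x = (\<Sum>b\<in>Q. a b * min ((G - b) * x) (b * (G - x)))"
proof (cases "Q = {}")
  case True
  then show thesis
    using g0 gG by (intro that[of "\<lambda>_. 0"]) auto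
next
  case False
  then have "0 < G"
    using Q by auto
  define N where "N = insert 0 (insert G Q)"
  have N: "finite N" "0 \<in> N" "N \<subseteq> {0..}"
    using Q \<open>0 < G\<close> by (auto simp: N_def)
  have "Max N = G"
    unfolding N_def using Q \<open>0 < G\<close> by (intro Max_eqI) auto
  with conc have "concave_on {0..Max N} g"
    by simp
  then obtain d where d_nonneg: "\<forall>b\<in>N - {0}. b < Max N \<longrightarrow> 0 \<le> d b"
    and g_N: "\<forall>x\<in>N. g x = (\<Sum>b\<in>N - {0}. d b * min x b)"
    using g0 by (rule concave_eq_sum_hinges[OF N]) blast
  have "N - {0} = insert G Q" "G \<notin> Q"
    using Q \<open>0 < G\<close> by (auto simp: N_def)
  have g_lin: "g x = d G * x + (\<Sum>b\<in>Q. d b * min x b)" if "x \<in> N" for x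
  proof -
    have "x \<le> G"
      using that Q \<open>0 < G\<close> by (auto simp: N_def)
    then show ?thesis
      using g_N that Q(1) \<open>N - {0} = insert G Q\<close> \<open>G \<notin> Q\<close> by (simp add: min_absorb1)
  qed
  have "(\<Sum>b\<in>Q. d b * min G b) = (\<Sum>b\<in>Q. d b * b)"
    using Q by (intro sum.cong) (auto simp: min_absorb2 less_imp_le)
  \<comment> \<open>the hinge at G is linear on [0, G]; evaluating at G expresses its weight by the others\<close>
  then have d_G: "(\<Sum>b\<in>Q. d b * b) = - (d G * G)"
    using g_lin[of G] gG by (simp add: N_def)
  have "g x = (\<Sum>b\<in>Q. d b / G * min ((G - b) * x) (b * (G - x)))" if "x \<in> N" for x
    using g_lin[OF that] sum_hinges_eq_sum_tents[OF \<open>0 < G\<close> d_G] by simp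
  moreover have "0 \<le> d b / G" if "b \<in> Q" for b
    using that d_nonneg Q \<open>0 < G\<close> \<open>N - {0} = insert G Q\<close> \<open>Max N = G\<close> by auto
  ultimately show thesis
    by (intro that[of "\<lambda>b. d b / G"]) (auto simp: N_def)
qed
lemma concave_symmetric_le:
  fixes g :: "real \<Rightarrow> real"
  assumes conc: "concave_on {0..G} g" and sym: "\<forall>x\<in>{0..G}. g x = g (G - x)"
    and xy: "0 \<le> x" "x \<le> y" "y \<le> G / 2"
  shows "g x \<le> g y"
proof -
  have "concave_on {x..G - x} g"
    using xy by (auto intro: concave_on_subset[OF conc])
  then have "min (g x) (g (G - x)) \<le> g y"
    using xy by (intro concave_on_ge_min) auto
  moreover have "g (G - x) = g x"
    using bspec[OF sym, of x] xy by simp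
  ultimately show ?thesis
    by simp
qed

lemma concave_symmetric_eq_sum_hinges:
  fixes g :: "real \<Rightarrow> real" and Q :: "real set"
  assumes Q: "finite Q" "Q \<subseteq> {0<..G / 2}" and "0 \<le> G"
    and conc: "concave_on {0..G} g" and g0: "g 0 = 0"
    and sym: "\<forall>x\<in>{0..G}. g x = g (G - x)"
  obtains a where "\<forall>b\<in>Q. 0 \<le> a b" and "\<forall>x\<in>insert 0 Q. g x = (\<Sum>b\<in>Q. a b * min x b)"
proof -
  define N where "N = insert 0 Q"
  have N: "finite N" "0 \<in> N" "N \<subseteq> {0..}" and "N - {0} = Q"
    using Q by (auto simp: N_def)
  have "Max N \<le> G / 2"
    using N Q \<open>0 \<le> G\<close> by (subst Max_le_iff) (auto simp: N_def)
  then have "concave_on {0..Max N} g"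
    using \<open>0 \<le> G\<close> by (auto intro: concave_on_subset[OF conc])
  then obtain d where d_nonneg: "\<forall>b\<in>N - {0}. b < Max N \<longrightarrow> 0 \<le> d b"
    and d_Max: "(\<forall>x\<in>N. g x \<le> g (Max N)) \<Longrightarrow> 0 \<le> d (Max N)"
    and g_N: "\<forall>x\<in>N. g x = (\<Sum>b\<in>N - {0}. d b * min x b)"
    using g0 by (rule concave_eq_sum_hinges[OF N]) blast
  have "\<forall>x\<in>N. g x \<le> g (Max N)"
    using N \<open>Max N \<le> G / 2\<close> by (auto intro: concave_symmetric_le[OF conc sym])
  then have "0 \<le> d b" if "b \<in> Q" for b
    using that d_nonneg d_Max N \<open>N - {0} = Q\<close> by (metis Diff_iff Max_ge le_less)
  with g_N \<open>N - {0} = Q\<close> show thesis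
    by (intro that[of d]) (auto simp: N_def)
qed


lemma sum_tents_eq_gadget_split_asym_union:
  fixes \<gamma> :: "'a \<Rightarrow> real"
  assumes "finite e" "finite Q" "S \<subseteq> e" and a_nonneg: "\<forall>b\<in>Q. 0 \<le> a b"
  shows "(\<Sum>b\<in>Q. a b * min ((sum \<gamma> e - b) * sum \<gamma> S) (b * sum \<gamma> (e - S)))
    = gadget_split e Q (asym_union_W \<gamma> (\<lambda>b. a b * (sum \<gamma> e - b)) (\<lambda>b. a b * b)) S"
  using assms a_nonneg
  by (simp add: asym_union_W_eq_asym_gadgets_W gadget_split_asym_gadgets min_mult_distrib_left
      mult.assoc cong: sum.cong)

lemma graph_reducible_sum_tents:
  fixes \<gamma> :: "'a \<Rightarrow> real"
  assumes "finite e" "finite Q" "Q \<subseteq> {0..sum \<gamma> e}" "\<forall>v\<in>e. 0 \<le> \<gamma> v" "\<forall>b\<in>Q. 0 \<le> a b"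
    and w: "\<And>S. S \<subseteq> e \<Longrightarrow> w S = (\<Sum>b\<in>Q. a b * min ((sum \<gamma> e - b) * sum \<gamma> S) (b * sum \<gamma> (e - S)))"
  shows "graph_reducible e w"
proof (rule graph_reducible_sum_asym_gadgets[OF assms(1,2,4)])
  show "\<forall>b\<in>Q. 0 \<le> a b * (sum \<gamma> e - b)" "\<forall>b\<in>Q. 0 \<le> a b * b"
    using assms(3,5) by auto
  show "w S = (\<Sum>b\<in>Q. min (a b * (sum \<gamma> e - b) * sum \<gamma> S) (a b * b * sum \<gamma> (e - S)))"
    if "S \<subseteq> e" for S
    using w[OF that] assms(5) by (simp add: min_mult_distrib_left mult.assoc cong: sum.cong)
qed

lemma finite_Q_a: "finite e \<Longrightarrow> finite (Q_a e \<gamma>)"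
  by (rule finite_subset[of _ "sum \<gamma> ` Pow e"]) (auto simp: Q_a_def)

lemma finite_Q_s: "finite e \<Longrightarrow> finite (Q_s e \<gamma>)"
  by (rule finite_subset[of _ "sum \<gamma> ` Pow e"]) (auto simp: Q_s_def)

lemma Q_a_subset:
  fixes \<gamma> :: "'a \<Rightarrow> real"
  assumes "finite e" and "\<forall>v\<in>e. 0 < \<gamma> v"
  shows "Q_a e \<gamma> \<subseteq> {0<..<sum \<gamma> e}"
proof
  fix b assume "b \<in> Q_a e \<gamma>"
  then obtain S where S: "b = sum \<gamma> S" "S \<noteq> {}" "S \<subset> e"
    unfolding Q_a_def by auto
  then have "0 < sum \<gamma> S" "0 < sum \<gamma> (e - S)"
    using assms finite_subset[of S e] by (auto intro!: sum_pos)
  moreover have "sum \<gamma> (e - S) = sum \<gamma> e - sum \<gamma> S"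
    using assms S by (simp add: sum_diff finite_subset)
  ultimately show "b \<in> {0<..<sum \<gamma> e}"
    using S by simp
qed

lemma Q_s_subset: "Q_s e \<gamma> \<subseteq> {0<..sum \<gamma> e / 2}"
  by (auto simp: Q_s_def)

lemma concave_splitting_eq_sum_tents:
  fixes \<gamma> :: "'a \<Rightarrow> real" and g :: "real \<Rightarrow> real"
  assumes "finite e" and "\<forall>v\<in>e. 0 < \<gamma> v"
    and conc: "concave_on {0..sum \<gamma> e} g" and "g 0 = 0" and "g (sum \<gamma> e) = 0"
  obtains a where "\<forall>b\<in>Q_a e \<gamma>. 0 \<le> a b"
    and "\<forall>S. S \<subseteq> e \<longrightarrow> g (sum \<gamma> S) =
      (\<Sum>b\<in>Q_a e \<gamma>. a b * min ((sum \<gamma> e - b) * sum \<gamma> S) (b * sum \<gamma> (e - S)))"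
proof -
  obtain a where a_nonneg: "\<forall>b\<in>Q_a e \<gamma>. 0 \<le> a b" and tents: "\<forall>x\<in>insert 0 (insert (sum \<gamma> e) (Q_a e \<gamma>)).
      g x = (\<Sum>b\<in>Q_a e \<gamma>. a b * min ((sum \<gamma> e - b) * x) (b * (sum \<gamma> e - x)))"
    using concave_eq_sum_tents[OF finite_Q_a[OF \<open>finite e\<close>] Q_a_subset[OF assms(1,2)] conc assms(4,5)]
    by blast
  have "g (sum \<gamma> S) = (\<Sum>b\<in>Q_a e \<gamma>. a b * min ((sum \<gamma> e - b) * sum \<gamma> S) (b * sum \<gamma> (e - S)))"
    if "S \<subseteq> e" for S
  proof -
    have "sum \<gamma> S \<in> insert 0 (insert (sum \<gamma> e) (Q_a e \<gamma>))"
      using that by (cases "S = {} \<or> S = e") (auto simp: Q_a_def)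
    moreover have "sum \<gamma> (e - S) = sum \<gamma> e - sum \<gamma> S"
      using that \<open>finite e\<close> by (simp add: sum_diff finite_subset)
    ultimately show ?thesis
      using tents by (simp only:)
  qed
  with a_nonneg show thesis
    by (intro that[of a]) auto
qed

lemma min_splitting_mem_Q_s:
  fixes \<gamma> :: "'a \<Rightarrow> real"
  assumes "finite e" "\<forall>v\<in>e. 0 \<le> \<gamma> v" "S \<subseteq> e"
  shows "min (sum \<gamma> S) (sum \<gamma> (e - S)) \<in> insert 0 (Q_s e \<gamma>)"
proof -
  have "sum \<gamma> (e - S) = sum \<gamma> e - sum \<gamma> S"
    using assms by (simp add: sum_diff finite_subset)
  moreover have "0 \<le> sum \<gamma> S" "0 \<le> sum \<gamma> (e - S)"
    using assms by (auto intro!: sum_nonneg)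
  moreover obtain T where "T \<subseteq> e" "min (sum \<gamma> S) (sum \<gamma> (e - S)) = sum \<gamma> T"
    using assms by (cases "sum \<gamma> S \<le> sum \<gamma> (e - S)") (auto simp: min_def)
  ultimately show ?thesis
    unfolding Q_s_def by (cases "min (sum \<gamma> S) (sum \<gamma> (e - S)) = 0") (auto intro!: exI[of _ T])
qed

lemma symmetric_splitting_eq_min:
  fixes \<gamma> :: "'a \<Rightarrow> real"
  assumes "finite e" "\<forall>v\<in>e. 0 \<le> \<gamma> v" "S \<subseteq> e"
    and sym: "\<forall>x\<in>{0..sum \<gamma> e}. g x = g (sum \<gamma> e - x)"
  shows "g (sum \<gamma> S) = g (min (sum \<gamma> S) (sum \<gamma> (e - S)))"
proof -
  have "sum \<gamma> (e - S) = sum \<gamma> e - sum \<gamma> S"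
    using assms(1,3) by (simp add: sum_diff finite_subset)
  moreover have "0 \<le> sum \<gamma> S" "0 \<le> sum \<gamma> (e - S)"
    using assms(2,3) by (auto intro!: sum_nonneg)
  ultimately have "sum \<gamma> S \<in> {0..sum \<gamma> e}"
    by simp
  with \<open>sum \<gamma> (e - S) = sum \<gamma> e - sum \<gamma> S\<close> show ?thesis
    using bspec[OF sym \<open>sum \<gamma> S \<in> {0..sum \<gamma> e}\<close>] by (simp add: min_def)
qed

lemma concave_symmetric_splitting_eq_sum_hinges:
  fixes \<gamma> :: "'a \<Rightarrow> real" and g :: "real \<Rightarrow> real"
  assumes "finite e" and \<gamma>_nonneg: "\<forall>v\<in>e. 0 \<le> \<gamma> v"
    and conc: "concave_on {0..sum \<gamma> e} g" and "g 0 = 0"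
    and sym: "\<forall>x\<in>{0..sum \<gamma> e}. g x = g (sum \<gamma> e - x)"
  obtains a where "\<forall>b\<in>Q_s e \<gamma>. 0 \<le> a b"
    and "\<forall>S. S \<subseteq> e \<longrightarrow> g (sum \<gamma> S) = (\<Sum>b\<in>Q_s e \<gamma>. a b * min (min (sum \<gamma> S) (sum \<gamma> (e - S))) b)"
proof -
  have "0 \<le> sum \<gamma> e"
    using \<gamma>_nonneg by (intro sum_nonneg) auto
  then obtain a where a_nonneg: "\<forall>b\<in>Q_s e \<gamma>. 0 \<le> a b"
    and hinges: "\<forall>x\<in>insert 0 (Q_s e \<gamma>). g x = (\<Sum>b\<in>Q_s e \<gamma>. a b * min x b)"
    using concave_symmetric_eq_sum_hinges[OF finite_Q_s[OF \<open>finite e\<close>] Q_s_subset _ conc \<open>g 0 = 0\<close> sym]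
    by blast
  have "g (sum \<gamma> S) = (\<Sum>b\<in>Q_s e \<gamma>. a b * min (min (sum \<gamma> S) (sum \<gamma> (e - S))) b)"
    if "S \<subseteq> e" for S
    using symmetric_splitting_eq_min[OF \<open>finite e\<close> \<gamma>_nonneg that sym]
      bspec[OF hinges min_splitting_mem_Q_s[OF \<open>finite e\<close> \<gamma>_nonneg that]]
    by simp
  with a_nonneg show thesis
    by (intro that[of a]) auto
qed

theorem theorem3:
  fixes e :: "'a set" and \<gamma> :: "'a \<Rightarrow> real" and g :: "real \<Rightarrow> real"
  assumes fin: "finite e" and card: "card e \<ge> 2"
    and gpos: "\<forall>v\<in>e. 0 < \<gamma> v"
    and conc: "concave_on {0..sum \<gamma> e} g"
    and gnn: "\<forall>x\<in>{0..sum \<gamma> e}. 0 \<le> g x"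
    and g0: "g 0 = 0" and gG: "g (sum \<gamma> e) = 0"
  shows "graph_reducible e (\<lambda>S. g (sum \<gamma> S))
       \<and> (\<exists>a :: real \<Rightarrow> real. (\<forall>b\<in>Q_a e \<gamma>. 0 \<le> a b) \<and>
            (\<forall>S. S \<subseteq> e \<longrightarrow>
               g (sum \<gamma> S) = (\<Sum>b\<in>Q_a e \<gamma>. a b *
                   min ((sum \<gamma> e - b) * sum \<gamma> S) (b * sum \<gamma> (e - S)))) \<and>
            (\<forall>S. S \<subseteq> e \<longrightarrow>
               g (sum \<gamma> S) = gadget_split e (Q_a e \<gamma>)
                  (asym_union_W \<gamma> (\<lambda>b. a b * (sum \<gamma> e - b)) (\<lambda>b. a b * b)) S))
       \<and> ((\<forall>x\<in>{0..sum \<gamma> e}. g x = g (sum \<gamma> e - x)) \<longrightarrow>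
          (\<exists>a :: real \<Rightarrow> real. (\<forall>b\<in>Q_s e \<gamma>. 0 \<le> a b) \<and>
            (\<forall>S. S \<subseteq> e \<longrightarrow>
               g (sum \<gamma> S) = (\<Sum>b\<in>Q_s e \<gamma>. a b *
                   min (min (sum \<gamma> S) (sum \<gamma> (e - S))) b)) \<and>
            (\<forall>S. S \<subseteq> e \<longrightarrow>
               g (sum \<gamma> S) = gadget_split e (Q_s e \<gamma> \<times> UNIV) (sym_union_W \<gamma> a) S)))"
proof -
  \<comment> \<open>\<open>gnn\<close> follows from concavity and \<open>g0\<close>, \<open>gG\<close>\<close>
  have \<gamma>_nonneg: "\<forall>v\<in>e. 0 \<le> \<gamma> v"
    using gpos by (simp add: less_imp_le)
  obtain a where a_nonneg: "\<forall>b\<in>Q_a e \<gamma>. 0 \<le> a b" and tents: "\<forall>S. S \<subseteq> e \<longrightarrow> g (sum \<gamma> S) =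
      (\<Sum>b\<in>Q_a e \<gamma>. a b * min ((sum \<gamma> e - b) * sum \<gamma> S) (b * sum \<gamma> (e - S)))"
    using concave_splitting_eq_sum_tents[OF fin gpos conc g0 gG] by blast
  have "graph_reducible e (\<lambda>S. g (sum \<gamma> S))"
    using Q_a_subset[OF fin gpos] tents
    by (intro graph_reducible_sum_tents[OF fin finite_Q_a[OF fin] _ \<gamma>_nonneg a_nonneg]) auto
  moreover have "\<forall>S. S \<subseteq> e \<longrightarrow> g (sum \<gamma> S) = gadget_split e (Q_a e \<gamma>)
      (asym_union_W \<gamma> (\<lambda>b. a b * (sum \<gamma> e - b)) (\<lambda>b. a b * b)) S"
    using tents sum_tents_eq_gadget_split_asym_union[OF fin finite_Q_a[OF fin] _ a_nonneg] by simp
  moreover have "\<exists>c. (\<forall>b\<in>Q_s e \<gamma>. 0 \<le> c b) \<and>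
      (\<forall>S. S \<subseteq> e \<longrightarrow> g (sum \<gamma> S) = (\<Sum>b\<in>Q_s e \<gamma>. c b * min (min (sum \<gamma> S) (sum \<gamma> (e - S))) b)) \<and>
      (\<forall>S. S \<subseteq> e \<longrightarrow> g (sum \<gamma> S) = gadget_split e (Q_s e \<gamma> \<times> UNIV) (sym_union_W \<gamma> c) S)"
    if sym: "\<forall>x\<in>{0..sum \<gamma> e}. g x = g (sum \<gamma> e - x)"
  proof -
    obtain c where c_nonneg: "\<forall>b\<in>Q_s e \<gamma>. 0 \<le> c b" and hinges: "\<forall>S. S \<subseteq> e \<longrightarrow>
        g (sum \<gamma> S) = (\<Sum>b\<in>Q_s e \<gamma>. c b * min (min (sum \<gamma> S) (sum \<gamma> (e - S))) b)"
      using concave_symmetric_splitting_eq_sum_hinges[OF fin \<gamma>_nonneg conc g0 sym] by blast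
    with gadget_split_sym_union[OF fin finite_Q_s[OF fin] _ c_nonneg \<gamma>_nonneg] show ?thesis
      by (intro exI[of _ c]) simp
  qed
  ultimately show ?thesis
    using a_nonneg tents by blast
qed

end
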